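(* Let $\mathcal{G}$ be the affine plane of order $3$, let $R$ be a commutative ring with $2=0$, let $A=M_R(\mathcal{G},1)$ and $A'=A/\operatorname{Ann}(A)$ (an $8$-dimensional algebra). For each of the $12$ lines $\ell$ of $\mathcal{G}$, let $A'^\ell_0$ and $A'^\ell_1$ be the eigenspaces of $\operatorname{ad}_\ell$ on $A'$ for the eigenvalues $0$ and $1$. Then for each line $\ell$, $A'=A'^\ell_0\oplus A'^\ell_1$ and \[ A'^\ell_0A'^\ell_0\subseteq A'^\ell_0,\quad A'^\ell_0A'^\ell_1\subseteq A'^\ell_1,\quad A'^\ell_1A'^\ell_1\subseteq A'^\ell_0, \] i.e. $A'$ is a decomposition algebra with fusion law $0*0=\{0\}$, $0*1=1*0=\{1\}$, $1*1=\{0\}$.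
   Context: The affine plane of order $3$ is the partial linear space of the $9$ points and $12$ lines of the affine plane over $\mathbb{F}_3$ (the Fischer space of $3^2:2$); for distinct points $p,q$ (all distinct pairs are collinear, written $p\sim q$), $p\wedge q$ is the third point of their line. The nilpotent Matsuo algebra $A=M_R(\mathcal{G},1)$ is the free $R$-module with basis the points and commutative bilinear product $p\cdot q=0$ if $p=q$, and $p\cdot q=p+q+p\wedge q$ if $p\sim q$. $\operatorname{Ann}(A)=\{v\in A: vw=0\ \forall w\in A\}$ and $A'=A/\operatorname{Ann}(A)$ with induced product. For a line $\ell$ we also write $\ell$ for the sum of its three points, and $\operatorname{ad}_\ell(v)=\ell v$ (also on $A'$); the eigenspace for $\lambda$ is $\{v:\ell v=\lambda v\}$. *)

theory Defs
  imports Main "HOL-Library.Numeral_Type"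
begin

text \<open>Points of the affine plane of order 3: the vectors of F_3^2, modelled by the
  finite type 3 \<times> 3 (the numeral type 3 is the ring Z/3Z).  Any two distinct points
  are collinear, and the third point of the line through p and q is -(p+q).\<close>

type_synonym point = "3 \<times> 3"

definition wedge :: "point \<Rightarrow> point \<Rightarrow> point" where
  "wedge p q = (- (fst p + fst q), - (snd p + snd q))"

definition lines :: "point set set" where
  "lines = {{p, q, wedge p q} | p q. p \<noteq> q}"

text \<open>The nilpotent Matsuo algebra M_R(G,1): elements are coefficient functions
  point \<Rightarrow> R (free R-module on the 9 points); product extended bilinearly from
  p\<cdot>p = 0 and p\<cdot>q = p + q + p\<wedge>q for p \<noteq> q.\<close>

definition basis_prod :: "point \<Rightarrow> point \<Rightarrow> point \<Rightarrow> 'r::comm_ring_1" where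
  "basis_prod p q = (\<lambda>x. if p \<noteq> q \<and> (x = p \<or> x = q \<or> x = wedge p q) then 1 else 0)"

definition mprod :: "(point \<Rightarrow> 'r::comm_ring_1) \<Rightarrow> (point \<Rightarrow> 'r) \<Rightarrow> (point \<Rightarrow> 'r)" where
  "mprod v w = (\<lambda>x. \<Sum>p\<in>UNIV. \<Sum>q\<in>UNIV. v p * w q * basis_prod p q x)"

definition Ann :: "(point \<Rightarrow> 'r::comm_ring_1) set" where
  "Ann = {v. \<forall>w x. mprod v w x = 0}"

text \<open>A line, viewed as the sum of its three points.\<close>
definition line_vec :: "point set \<Rightarrow> point \<Rightarrow> 'r::comm_ring_1" where
  "line_vec l = (\<lambda>x. if x \<in> l then 1 else 0)"

text \<open>We work with representatives: the class of v in A' lies in the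
  \<lambda>-eigenspace of ad_l on A' iff l v - \<lambda> v \<in> Ann(A).  qeig l lam is the preimage in A of
  the eigenspace A'^l_lam.\<close>
definition qeig :: "point set \<Rightarrow> 'r::comm_ring_1 \<Rightarrow> (point \<Rightarrow> 'r) set" where
  "qeig l lam = {v. (\<lambda>x. mprod (line_vec l) v x - lam * v x) \<in> Ann}"

end

theory Submission
  imports Defs "HOL-Number_Theory.Cong"
begin

text \<open>Write \<open>L\<close> for \<open>ad\<^sub>\<ell>\<close>. Modulo \<open>Ann(A)\<close>, \<open>L\<close> is idempotent and a derivation of \<open>A\<close>, and
  this alone forces the fusion law: \<open>v = (v - L v) + L v\<close> splits \<open>A'\<close> into the two eigenspaces,
  and \<open>L (v w) = (L v) w + v (L w)\<close> gives the products, with \<open>1 * 1\<close> landing in the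
  \<open>0\<close>-eigenspace because \<open>2 v w = 0\<close>.
  Both properties are statements about integer structure constants: when \<open>2 = 0\<close>, every constant
  vector is annihilated (each column of the multiplication table has an even sum), so it suffices that
  the defect kernels of idempotence and of the derivation rule are constant modulo 2 in the output
  point. The affine group of \<open>F\<^sub>3\<^sup>2\<close> acts transitively on the lines, so this has to be checked for
  one line only, which is a finite computation.\<close>

lemma ex_of_nat_less_3: "\<exists>k<3. (a :: 3) = of_nat k"
proof (cases a)
  case (of_int z)
  then show ?thesis by (intro exI[of _ "nat z"]) auto
qed

lemma three_cases: "(a :: 3) = 0 \<or> a = 1 \<or> a = 2"
proof -
  obtain k where "k < 3" "a = of_nat k" using ex_of_nat_less_3 by blast
  then show ?thesis by (auto simp: less_Suc_eq numeral_3_eq_3)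
qed

lemma three_eq_0: "(3 :: 3) = 0"
  by simp

lemma uminus_eq_double_3: "- (a :: 3) = 2 * a"
proof -
  have "a + 2 * a = 3 * a" by (simp add: algebra_simps)
  then show ?thesis by (simp add: three_eq_0 minus_unique)
qed

lemma square_eq_1_3: "(c :: 3) \<noteq> 0 \<Longrightarrow> c * c = 1"
  using three_cases[of c] by auto

lemma wedge_commute: "wedge p q = wedge q p"
  by (simp add: wedge_def add.commute)

lemma basis_prod_commute: "basis_prod p q = basis_prod q p"
  by (auto simp: basis_prod_def wedge_commute fun_eq_iff)

lemma mprod_commute: "mprod v w = mprod w v"
  unfolding mprod_def
  by (rule ext, subst sum.swap) (simp add: basis_prod_commute mult.commute mult.left_commute)

lemma mprod_diff_left: "mprod (\<lambda>x. a x - b x) w y = mprod a w y - mprod b w y"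
  unfolding mprod_def by (simp add: algebra_simps sum_subtractf)

lemma mprod_diff_right: "mprod v (\<lambda>x. a x - b x) y = mprod v a y - mprod v b y"
  unfolding mprod_def by (simp add: algebra_simps sum_subtractf)

lemma Ann_mprod_left: "v \<in> Ann \<Longrightarrow> mprod v w y = 0"
  unfolding Ann_def by blast

lemma Ann_mprod_right: "v \<in> Ann \<Longrightarrow> mprod w v y = 0"
  using Ann_mprod_left[of v w y] by (simp add: mprod_commute)

lemma zero_in_Ann: "(\<lambda>_. 0) \<in> Ann"
  by (simp add: Ann_def mprod_def)

lemma Ann_diff: "a \<in> Ann \<Longrightarrow> b \<in> Ann \<Longrightarrow> (\<lambda>x. a x - b x) \<in> Ann"
  by (simp add: Ann_def mprod_diff_left)

lemma Ann_uminus: "a \<in> Ann \<Longrightarrow> (\<lambda>x. - a x) \<in> Ann"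
  using Ann_diff[OF zero_in_Ann, of a] by simp

lemma Ann_cong: "f \<in> Ann \<Longrightarrow> (\<And>x. g x = f x) \<Longrightarrow> g \<in> Ann"
  by (metis ext)

section \<open>The fusion law from an idempotent derivation\<close>

definition idempotent_mod_Ann :: "((point \<Rightarrow> 'r::comm_ring_1) \<Rightarrow> point \<Rightarrow> 'r) \<Rightarrow> bool" where
  "idempotent_mod_Ann L \<longleftrightarrow> (\<forall>v. (\<lambda>x. L (L v) x - L v x) \<in> Ann)"

definition derivation_mod_Ann :: "((point \<Rightarrow> 'r::comm_ring_1) \<Rightarrow> point \<Rightarrow> 'r) \<Rightarrow> bool" where
  "derivation_mod_Ann L \<longleftrightarrow>
     (\<forall>v w. (\<lambda>x. L (mprod v w) x - mprod v (L w) x - mprod (L v) w x) \<in> Ann)"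

lemma qeig_0_iff: "v \<in> qeig l 0 \<longleftrightarrow> mprod (line_vec l) v \<in> Ann"
  by (simp add: qeig_def)

lemma qeig_1_iff: "v \<in> qeig l 1 \<longleftrightarrow> (\<lambda>x. mprod (line_vec l) v x - v x) \<in> Ann"
  by (simp add: qeig_def)

lemma qeig_decomposition:
  fixes v :: "point \<Rightarrow> 'r::comm_ring_1"
  assumes "idempotent_mod_Ann (mprod (line_vec l :: point \<Rightarrow> 'r))"
  shows "\<exists>v0 v1. v0 \<in> qeig l 0 \<and> v1 \<in> qeig l 1 \<and> (\<lambda>x. v x - (v0 x + v1 x)) \<in> Ann"
proof (intro exI conjI)
  let ?L = "mprod (line_vec l)"
  have idem: "(\<lambda>x. ?L (?L v) x - ?L v x) \<in> Ann"
    using assms by (simp add: idempotent_mod_Ann_def)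
  show "(\<lambda>x. v x - ?L v x) \<in> qeig l 0"
    unfolding qeig_0_iff by (rule Ann_cong[OF Ann_uminus[OF idem]]) (simp add: mprod_diff_right)
  show "?L v \<in> qeig l 1"
    unfolding qeig_1_iff by (rule idem)
  show "(\<lambda>x. v x - ((v x - ?L v x) + ?L v x)) \<in> Ann"
    by (rule Ann_cong[OF zero_in_Ann]) simp
qed

lemma qeig_0_inter_1: "v \<in> qeig l 0 \<Longrightarrow> v \<in> qeig l 1 \<Longrightarrow> v \<in> Ann"
  unfolding qeig_0_iff qeig_1_iff by (drule (1) Ann_diff) (simp add: Ann_cong)

context
  fixes l :: "point set" and v w :: "point \<Rightarrow> 'r::comm_ring_1"
  assumes derivation: "derivation_mod_Ann (mprod (line_vec l :: point \<Rightarrow> 'r))"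
begin

private abbreviation "L \<equiv> mprod (line_vec l :: point \<Rightarrow> 'r)"

private lemma defect_in_Ann: "(\<lambda>x. L (mprod v w) x - mprod v (L w) x - mprod (L v) w x) \<in> Ann"
  using derivation by (simp add: derivation_mod_Ann_def)

lemma qeig_mprod_0_0: "v \<in> qeig l 0 \<Longrightarrow> w \<in> qeig l 0 \<Longrightarrow> mprod v w \<in> qeig l 0"
  unfolding qeig_0_iff
  by (rule Ann_cong[OF defect_in_Ann]) (simp add: Ann_mprod_left Ann_mprod_right)

lemma qeig_mprod_0_1: "v \<in> qeig l 0 \<Longrightarrow> w \<in> qeig l 1 \<Longrightarrow> mprod v w \<in> qeig l 1"
proof -
  assume "v \<in> qeig l 0" "w \<in> qeig l 1"
  then have "mprod (L v) w y = 0" "mprod v (\<lambda>x. L w x - w x) y = 0" for y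
    unfolding qeig_0_iff qeig_1_iff by (simp_all add: Ann_mprod_left Ann_mprod_right)
  then have "L (mprod v w) y - mprod v w y = L (mprod v w) y - mprod v (L w) y - mprod (L v) w y" for y
    unfolding mprod_diff_right by simp
  then show ?thesis
    unfolding qeig_1_iff by (rule Ann_cong[OF defect_in_Ann])
qed

lemma qeig_mprod_1_1:
  "(2 :: 'r) = 0 \<Longrightarrow> v \<in> qeig l 1 \<Longrightarrow> w \<in> qeig l 1 \<Longrightarrow> mprod v w \<in> qeig l 0"
proof -
  \<comment> \<open>\<open>L(vw) = (L(vw) - v L w - (L v) w) + v (L w - w) + (L v - v) w + 2 v w\<close>\<close>
  assume char2: "(2 :: 'r) = 0" and "v \<in> qeig l 1" "w \<in> qeig l 1"
  then have "mprod v (\<lambda>x. L w x - w x) y = 0" "mprod (\<lambda>x. L v x - v x) w y = 0" for y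
    unfolding qeig_1_iff by (simp_all add: Ann_mprod_left Ann_mprod_right)
  then have "L (mprod v w) y = L (mprod v w) y - mprod v (L w) y - mprod (L v) w y" for y
    using char2 unfolding mprod_diff_left mprod_diff_right
    by (simp add: algebra_simps mult_2[symmetric])
  then show ?thesis
    unfolding qeig_0_iff by (rule Ann_cong[OF defect_in_Ann])
qed

end

section \<open>Integer structure constants\<close>

definition ad_coeff :: "point set \<Rightarrow> point \<Rightarrow> point \<Rightarrow> int" where
  "ad_coeff l y x = (\<Sum>a\<in>UNIV. line_vec l a * basis_prod a y x)"

definition idempotence_defect :: "point set \<Rightarrow> point \<Rightarrow> point \<Rightarrow> int" where
  "idempotence_defect l p x = (\<Sum>y\<in>UNIV. ad_coeff l p y * ad_coeff l y x) - ad_coeff l p x"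

definition derivation_defect :: "point set \<Rightarrow> point \<Rightarrow> point \<Rightarrow> point \<Rightarrow> int" where
  "derivation_defect l p q x = (\<Sum>y\<in>UNIV. basis_prod p q y * ad_coeff l y x
     - ad_coeff l q y * basis_prod p y x - ad_coeff l p y * basis_prod y q x)"

lemma of_int_basis_prod: "of_int (basis_prod p q x) = basis_prod p q x"
  by (simp add: basis_prod_def)

lemma of_int_line_vec: "of_int (line_vec l a) = line_vec l a"
  by (simp add: line_vec_def)

lemma mprod_of_int: "mprod v w x = (\<Sum>p\<in>UNIV. \<Sum>q\<in>UNIV. v p * w q * of_int (basis_prod p q x))"
  by (simp add: mprod_def of_int_basis_prod)

lemma ad_line_expand: "mprod (line_vec l) f x = (\<Sum>y\<in>UNIV. f y * of_int (ad_coeff l y x))"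
proof -
  have "mprod (line_vec l) f x
      = (\<Sum>a\<in>UNIV. \<Sum>y\<in>UNIV. f y * (of_int (line_vec l a) * of_int (basis_prod a y x)))"
    by (simp add: mprod_of_int of_int_line_vec mult_ac)
  also have "\<dots> = (\<Sum>y\<in>UNIV. \<Sum>a\<in>UNIV. f y * (of_int (line_vec l a) * of_int (basis_prod a y x)))"
    by (rule sum.swap)
  also have "\<dots> = (\<Sum>y\<in>UNIV. f y * of_int (ad_coeff l y x))"
    by (simp add: ad_coeff_def sum_distrib_left)
  finally show ?thesis .
qed

lemma idempotence_defect_expand:
  "mprod (line_vec l) (mprod (line_vec l) v) x - mprod (line_vec l) v x
     = (\<Sum>p\<in>UNIV. v p * of_int (idempotence_defect l p x))"
proof -
  have "mprod (line_vec l) (mprod (line_vec l) v) x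
      = (\<Sum>y\<in>UNIV. \<Sum>p\<in>UNIV. v p * (of_int (ad_coeff l p y) * of_int (ad_coeff l y x)))"
    unfolding ad_line_expand sum_distrib_right by (simp add: mult_ac)
  also have "\<dots> = (\<Sum>p\<in>UNIV. \<Sum>y\<in>UNIV. v p * (of_int (ad_coeff l p y) * of_int (ad_coeff l y x)))"
    by (rule sum.swap)
  finally show ?thesis
    by (simp add: idempotence_defect_def ad_line_expand right_diff_distrib sum_subtractf
        sum_distrib_left)
qed

lemma ad_line_mprod_expand:
  "mprod (line_vec l) (mprod v w) x
     = (\<Sum>p\<in>UNIV. \<Sum>q\<in>UNIV. v p * w q * of_int (\<Sum>y\<in>UNIV. basis_prod p q y * ad_coeff l y x))"
proof -
  have "mprod (line_vec l) (mprod v w) x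
      = (\<Sum>y\<in>UNIV. \<Sum>p\<in>UNIV. \<Sum>q\<in>UNIV. v p * w q * (of_int (basis_prod p q y) * of_int (ad_coeff l y x)))"
    unfolding ad_line_expand unfolding mprod_of_int sum_distrib_right by (simp add: mult_ac)
  also have "\<dots> = (\<Sum>p\<in>UNIV. \<Sum>y\<in>UNIV. \<Sum>q\<in>UNIV. v p * w q * (of_int (basis_prod p q y) * of_int (ad_coeff l y x)))"
    by (rule sum.swap)
  also have "\<dots> = (\<Sum>p\<in>UNIV. \<Sum>q\<in>UNIV. \<Sum>y\<in>UNIV. v p * w q * (of_int (basis_prod p q y) * of_int (ad_coeff l y x)))"
    by (rule sum.cong[OF refl], rule sum.swap)
  finally show ?thesis
    by (simp add: sum_distrib_left mult_ac)
qed

lemma mprod_ad_line_right_expand: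
  "mprod v (mprod (line_vec l) w) x
     = (\<Sum>p\<in>UNIV. \<Sum>q\<in>UNIV. v p * w q * of_int (\<Sum>y\<in>UNIV. ad_coeff l q y * basis_prod p y x))"
proof -
  have "mprod v (mprod (line_vec l) w) x
      = (\<Sum>p\<in>UNIV. \<Sum>y\<in>UNIV. \<Sum>q\<in>UNIV. v p * w q * (of_int (ad_coeff l q y) * of_int (basis_prod p y x)))"
    unfolding ad_line_expand unfolding mprod_of_int sum_distrib_right sum_distrib_left by (simp add: mult_ac)
  also have "\<dots> = (\<Sum>p\<in>UNIV. \<Sum>q\<in>UNIV. \<Sum>y\<in>UNIV. v p * w q * (of_int (ad_coeff l q y) * of_int (basis_prod p y x)))"
    by (rule sum.cong[OF refl], rule sum.swap)
  finally show ?thesis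
    by (simp add: sum_distrib_left mult_ac)
qed

lemma mprod_ad_line_left_expand:
  "mprod (mprod (line_vec l) v) w x
     = (\<Sum>p\<in>UNIV. \<Sum>q\<in>UNIV. v p * w q * of_int (\<Sum>y\<in>UNIV. ad_coeff l p y * basis_prod y q x))"
proof -
  have "mprod (mprod (line_vec l) v) w x = mprod w (mprod (line_vec l) v) x"
    by (simp add: mprod_commute)
  also have "\<dots> = (\<Sum>q\<in>UNIV. \<Sum>p\<in>UNIV. w q * v p * of_int (\<Sum>y\<in>UNIV. ad_coeff l p y * basis_prod y q x))"
    by (simp add: mprod_ad_line_right_expand basis_prod_commute)
  also have "\<dots> = (\<Sum>p\<in>UNIV. \<Sum>q\<in>UNIV. v p * w q * of_int (\<Sum>y\<in>UNIV. ad_coeff l p y * basis_prod y q x))"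
    by (subst sum.swap) (simp add: mult_ac)
  finally show ?thesis .
qed

lemma derivation_defect_expand:
  "mprod (line_vec l) (mprod v w) x - mprod v (mprod (line_vec l) w) x - mprod (mprod (line_vec l) v) w x
     = (\<Sum>p\<in>UNIV. \<Sum>q\<in>UNIV. v p * w q * of_int (derivation_defect l p q x))"
  by (simp add: ad_line_mprod_expand mprod_ad_line_right_expand mprod_ad_line_left_expand
      derivation_defect_def algebra_simps sum_subtractf sum.distrib)

section \<open>Collineations\<close>

definition axis :: "point set" where
  "axis = {p. snd p = 0}"

definition collineation :: "(point \<Rightarrow> point) \<Rightarrow> bool" where
  "collineation g \<longleftrightarrow> bij g \<and> (\<forall>p q. wedge (g p) (g q) = g (wedge p q))"

definition affine_map :: "point \<Rightarrow> point \<Rightarrow> point \<Rightarrow> point \<Rightarrow> point" where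
  "affine_map p d e x =
     (fst p + fst x * fst d + snd x * fst e, snd p + fst x * snd d + snd x * snd e)"

lemma wedge_affine_map:
  "wedge (affine_map p d e a) (affine_map p d e b) = affine_map p d e (wedge a b)"
proof -
  have "- (c + s * u + t * v + (c + s' * u + t' * v)) = c + - (s + s') * u + - (t + t') * v"
    for c s t s' t' u v :: 3
    by (simp add: uminus_eq_double_3 three_eq_0 algebra_simps)
  then show ?thesis by (simp add: wedge_def affine_map_def)
qed

lemma inj_affine_map:
  assumes det: "fst d * snd e \<noteq> snd d * fst e"
  shows "inj (affine_map p d e)"
proof (rule injI)
  fix a b :: point
  define \<delta> where "\<delta> = fst d * snd e - snd d * fst e"
  define s where "s = fst a - fst b"
  define t where "t = snd a - snd b"
  assume "affine_map p d e a = affine_map p d e b"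
  then have 1: "s * fst d + t * fst e = 0" and 2: "s * snd d + t * snd e = 0"
    by (simp_all add: affine_map_def s_def t_def algebra_simps)
  have "s * \<delta> = (s * fst d + t * fst e) * snd e - (s * snd d + t * snd e) * fst e"
    and "t * \<delta> = (s * snd d + t * snd e) * fst d - (s * fst d + t * fst e) * snd d"
    by (simp_all add: \<delta>_def algebra_simps)
  then have "s * \<delta> = 0" "t * \<delta> = 0" by (simp_all add: 1 2)
  moreover have "\<delta> * \<delta> = 1"
    using det by (simp add: \<delta>_def square_eq_1_3)
  ultimately have "s = 0" "t = 0"
    by (metis mult.assoc mult_1_right mult_zero_left)+
  then show "a = b" by (simp add: s_def t_def prod_eq_iff)
qed

lemma collineation_affine_map:
  "fst d * snd e \<noteq> snd d * fst e \<Longrightarrow> collineation (affine_map p d e)"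
  using inj_affine_map finite_UNIV_inj_surj[of "affine_map p d e"]
  by (simp add: collineation_def bij_def wedge_affine_map)

lemma lines_eq_image_axis:
  assumes "l \<in> lines"
  shows "\<exists>g. collineation g \<and> l = g ` axis"
proof -
  obtain p q where pq: "p \<noteq> q" and l: "l = {p, q, wedge p q}"
    using assms by (auto simp: lines_def)
  define d where "d = (fst q - fst p, snd q - snd p)"
  define e :: point where "e = (if fst d = 0 then (1, 0) else (0, 1))"
  have "d \<noteq> (0, 0)" using pq by (auto simp: d_def prod_eq_iff)
  then have "fst d * snd e \<noteq> snd d * fst e" by (auto simp: e_def prod_eq_iff)
  moreover have "affine_map p d e ` axis = {p, q, wedge p q}"
  proof -
    have axis: "axis = {(0, 0), (1, 0), (2, 0)}"
      using three_cases by (auto simp: axis_def)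
    have "a + 2 * (b - a) = - (a + b)" for a b :: 3
      by (simp add: uminus_eq_double_3 three_eq_0 algebra_simps)
    then have "affine_map p d e (0, 0) = p" "affine_map p d e (1, 0) = q"
      and "affine_map p d e (2, 0) = wedge p q"
      by (simp_all add: affine_map_def wedge_def d_def)
    then show ?thesis by (simp add: axis)
  qed
  ultimately show ?thesis using l collineation_affine_map by blast
qed

lemma basis_prod_collineation:
  assumes "collineation g"
  shows "basis_prod (g p) (g q) (g x) = basis_prod p q x"
proof -
  have "inj g" "wedge (g p) (g q) = g (wedge p q)"
    using assms unfolding collineation_def bij_def by blast+
  then show ?thesis by (simp add: basis_prod_def inj_eq)
qed

lemma line_vec_collineation: "collineation g \<Longrightarrow> line_vec (g ` l) (g a) = line_vec l a"
  by (simp add: line_vec_def collineation_def bij_def inj_image_mem_iff)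

lemma sum_collineation: "collineation g \<Longrightarrow> (\<Sum>a\<in>UNIV. f (g a)) = (\<Sum>a\<in>UNIV. f a)"
  unfolding collineation_def by (metis sum.reindex_bij_betw)

lemma ad_coeff_collineation: "collineation g \<Longrightarrow> ad_coeff (g ` l) (g y) (g x) = ad_coeff l y x"
  unfolding ad_coeff_def
  by (subst sum_collineation[of g, symmetric])
    (simp_all add: line_vec_collineation basis_prod_collineation)

lemma idempotence_defect_collineation:
  "collineation g \<Longrightarrow> idempotence_defect (g ` l) (g p) (g x) = idempotence_defect l p x"
  unfolding idempotence_defect_def
  by (subst sum_collineation[of g, symmetric]) (simp_all add: ad_coeff_collineation)

lemma derivation_defect_collineation:
  "collineation g \<Longrightarrow> derivation_defect (g ` l) (g p) (g q) (g x) = derivation_defect l p q x"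
  unfolding derivation_defect_def
  by (subst sum_collineation[of g, symmetric])
    (simp_all add: ad_coeff_collineation basis_prod_collineation)

section \<open>The finite check for one line\<close>

text \<open>The check runs on natural-number coordinates, since evaluation does not reduce arithmetic in the
  numeral type \<open>3\<close> itself.\<close>

definition coord :: "nat \<times> nat \<Rightarrow> point" where
  "coord n = (of_nat (fst n), of_nat (snd n))"

definition grid :: "(nat \<times> nat) list" where
  "grid = List.product [0..<3] [0..<3]"

lemma of_nat_eq_iff_mod_3: "(of_nat a :: 3) = of_nat b \<longleftrightarrow> a mod 3 = b mod 3"
  by (simp add: of_nat_eq_iff_cong_CHAR cong_def)

lemma coord_eq_iff: "coord n = coord m \<longleftrightarrow> fst n mod 3 = fst m mod 3 \<and> snd n mod 3 = snd m mod 3"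
  by (simp add: coord_def of_nat_eq_iff_mod_3)

lemma wedge_coord: "wedge (coord n) (coord m) = coord (2 * (fst n + fst m), 2 * (snd n + snd m))"
  by (simp add: wedge_def coord_def uminus_eq_double_3)

lemma coord_in_axis_iff: "coord n \<in> axis \<longleftrightarrow> snd n mod 3 = 0"
  using of_nat_eq_iff_mod_3[of "snd n" 0] by (simp add: axis_def coord_def)

lemma coord_origin: "coord (0, 0) = (0, 0)"
  by (simp add: coord_def)

lemma UNIV_point_eq: "(UNIV :: point set) = coord ` set grid"
proof -
  have "p \<in> coord ` set grid" for p :: point
    using ex_of_nat_less_3[of "fst p"] ex_of_nat_less_3[of "snd p"]
    by (force simp: grid_def coord_def image_iff prod_eq_iff)
  then show ?thesis by blast
qed

lemma inj_on_coord: "inj_on coord (set grid)"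
  by (auto simp: inj_on_def grid_def coord_def of_nat_eq_iff_mod_3)

lemma sum_UNIV_point: "sum f (UNIV :: point set) = (\<Sum>n\<in>set grid. f (coord n))"
  by (simp add: UNIV_point_eq sum.reindex[OF inj_on_coord])

lemma all_point_iff: "(\<forall>p :: point. P p) \<longleftrightarrow> (\<forall>n\<in>set grid. P (coord n))"
  by (metis UNIV_I UNIV_point_eq imageE)

lemmas grid_evaluation =
  all_point_iff sum_UNIV_point basis_prod_def line_vec_def coord_eq_iff wedge_coord coord_in_axis_iff

lemma even_column_sum: "even (\<Sum>p\<in>UNIV. basis_prod p q x :: int)"
proof -
  have "\<forall>q x :: point. even (\<Sum>p\<in>UNIV. basis_prod p q x :: int)"
    unfolding grid_evaluation by code_simp
  then show ?thesis by blast
qed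

lemma idempotence_defect_axis_parity: "even (idempotence_defect axis p x - idempotence_defect axis p y)"
proof -
  have "\<forall>p x. even (idempotence_defect axis p x - idempotence_defect axis p (coord (0, 0)))"
    unfolding idempotence_defect_def ad_coeff_def grid_evaluation by code_simp
  then have "even (idempotence_defect axis p x - idempotence_defect axis p (0, 0))"
    and "even (idempotence_defect axis p y - idempotence_defect axis p (0, 0))"
    unfolding coord_origin by blast+
  from dvd_diff[OF this] show ?thesis by simp
qed

lemma derivation_defect_axis_parity: "even (derivation_defect axis p q x - derivation_defect axis p q y)"
proof -
  have "\<forall>p q x. even (derivation_defect axis p q x - derivation_defect axis p q (coord (0, 0)))"
    unfolding derivation_defect_def ad_coeff_def grid_evaluation by code_simp
  then have "even (derivation_defect axis p q x - derivation_defect axis p q (0, 0))"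
    and "even (derivation_defect axis p q y - derivation_defect axis p q (0, 0))"
    unfolding coord_origin by blast+
  from dvd_diff[OF this] show ?thesis by simp
qed

lemma idempotence_defect_parity:
  assumes "l \<in> lines"
  shows "even (idempotence_defect l p x - idempotence_defect l p y)"
proof -
  obtain g where g: "collineation g" and l: "l = g ` axis"
    using lines_eq_image_axis[OF assms] by blast
  have "surj g" using g by (simp add: collineation_def bij_def)
  then have "idempotence_defect l p x = idempotence_defect axis (inv g p) (inv g x)" for p x
    using idempotence_defect_collineation[OF g, of axis "inv g p" "inv g x"]
    by (simp add: l surj_f_inv_f)
  then show ?thesis
    using idempotence_defect_axis_parity by simp
qed

lemma derivation_defect_parity:
  assumes "l \<in> lines"
  shows "even (derivation_defect l p q x - derivation_defect l p q y)"
proof -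
  obtain g where g: "collineation g" and l: "l = g ` axis"
    using lines_eq_image_axis[OF assms] by blast
  have "surj g" using g by (simp add: collineation_def bij_def)
  then have "derivation_defect l p q x = derivation_defect axis (inv g p) (inv g q) (inv g x)" for p q x
    using derivation_defect_collineation[OF g, of axis "inv g p" "inv g q" "inv g x"]
    by (simp add: l surj_f_inv_f)
  then show ?thesis
    using derivation_defect_axis_parity by simp
qed

lemma of_int_eq_if_even_diff:
  assumes "(2 :: 'r::comm_ring_1) = 0" "even (a - b)"
  shows "(of_int a :: 'r) = of_int b"
proof -
  obtain k where "a - b = 2 * k" using assms(2) by (elim evenE)
  then have "(of_int a :: 'r) - of_int b = 2 * of_int k"
    by (metis of_int_diff of_int_mult of_int_numeral)
  then show ?thesis using assms(1) by simp
qed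

lemma constant_in_Ann:
  fixes c :: "'r::comm_ring_1"
  assumes "(2 :: 'r) = 0"
  shows "(\<lambda>_. c) \<in> Ann"
proof -
  have "mprod (\<lambda>_. c) w x = 0" for w :: "point \<Rightarrow> 'r" and x
  proof -
    have column: "(of_int (\<Sum>p\<in>UNIV. basis_prod p q x) :: 'r) = of_int 0" for q
      by (rule of_int_eq_if_even_diff[OF assms]) (simp add: even_column_sum)
    have "mprod (\<lambda>_. c) w x = (\<Sum>q\<in>UNIV. c * w q * (\<Sum>p\<in>UNIV. of_int (basis_prod p q x)))"
      unfolding mprod_of_int by (subst sum.swap) (simp add: sum_distrib_left)
    also have "\<dots> = 0"
      using column by simp
    finally show ?thesis .
  qed
  then show ?thesis unfolding Ann_def by blast
qed

lemma ad_line_idempotent_mod_Ann: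
  fixes l :: "point set"
  assumes "(2 :: 'r::comm_ring_1) = 0" "l \<in> lines"
  shows "idempotent_mod_Ann (mprod (line_vec l :: point \<Rightarrow> 'r))"
  unfolding idempotent_mod_Ann_def
proof
  fix v :: "point \<Rightarrow> 'r"
  let ?c = "\<Sum>p\<in>UNIV. v p * of_int (idempotence_defect l p (0, 0))"
  show "(\<lambda>x. mprod (line_vec l) (mprod (line_vec l) v) x - mprod (line_vec l) v x) \<in> Ann"
  proof (rule Ann_cong[OF constant_in_Ann[OF assms(1), of ?c]])
    fix x
    have "(of_int (idempotence_defect l p x) :: 'r) = of_int (idempotence_defect l p (0, 0))" for p
      using of_int_eq_if_even_diff[OF assms(1) idempotence_defect_parity[OF assms(2)]] .
    then show "mprod (line_vec l) (mprod (line_vec l) v) x - mprod (line_vec l) v x = ?c"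
      unfolding idempotence_defect_expand by simp
  qed
qed

lemma ad_line_derivation_mod_Ann:
  fixes l :: "point set"
  assumes "(2 :: 'r::comm_ring_1) = 0" "l \<in> lines"
  shows "derivation_mod_Ann (mprod (line_vec l :: point \<Rightarrow> 'r))"
  unfolding derivation_mod_Ann_def
proof (intro allI)
  fix v w :: "point \<Rightarrow> 'r"
  let ?c = "\<Sum>p\<in>UNIV. \<Sum>q\<in>UNIV. v p * w q * of_int (derivation_defect l p q (0, 0))"
  show "(\<lambda>x. mprod (line_vec l) (mprod v w) x - mprod v (mprod (line_vec l) w) x
      - mprod (mprod (line_vec l) v) w x) \<in> Ann"
  proof (rule Ann_cong[OF constant_in_Ann[OF assms(1), of ?c]])
    fix x
    have "(of_int (derivation_defect l p q x) :: 'r) = of_int (derivation_defect l p q (0, 0))" for p q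
      using of_int_eq_if_even_diff[OF assms(1) derivation_defect_parity[OF assms(2)]] .
    then show "mprod (line_vec l) (mprod v w) x - mprod v (mprod (line_vec l) w) x
        - mprod (mprod (line_vec l) v) w x = ?c"
      unfolding derivation_defect_expand by simp
  qed
qed

theorem corollary5p18:
  fixes dummy :: "'r::comm_ring_1"
  assumes char2: "(2::'r) = 0"
    and l: "l \<in> lines"
  shows "(\<forall>v :: point \<Rightarrow> 'r. \<exists>v0 v1. v0 \<in> qeig l 0 \<and> v1 \<in> qeig l 1 \<and> (\<lambda>x. v x - (v0 x + v1 x)) \<in> Ann)
       \<and> (\<forall>v :: point \<Rightarrow> 'r. v \<in> qeig l 0 \<and> v \<in> qeig l 1 \<longrightarrow> v \<in> Ann)
       \<and> (\<forall>v w :: point \<Rightarrow> 'r. v \<in> qeig l 0 \<and> w \<in> qeig l 0 \<longrightarrow> mprod v w \<in> qeig l 0)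
       \<and> (\<forall>v w :: point \<Rightarrow> 'r. v \<in> qeig l 0 \<and> w \<in> qeig l 1 \<longrightarrow> mprod v w \<in> qeig l 1)
       \<and> (\<forall>v w :: point \<Rightarrow> 'r. v \<in> qeig l 1 \<and> w \<in> qeig l 1 \<longrightarrow> mprod v w \<in> qeig l 0)"
proof -
  have idem: "idempotent_mod_Ann (mprod (line_vec l :: point \<Rightarrow> 'r))"
    using ad_line_idempotent_mod_Ann[OF char2 l] .
  have deriv: "derivation_mod_Ann (mprod (line_vec l :: point \<Rightarrow> 'r))"
    using ad_line_derivation_mod_Ann[OF char2 l] .
  show ?thesis
  proof (intro conjI allI impI; (elim conjE)?)
    show "\<exists>v0 v1. v0 \<in> qeig l 0 \<and> v1 \<in> qeig l 1 \<and> (\<lambda>x. v x - (v0 x + v1 x)) \<in> Ann"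
      for v :: "point \<Rightarrow> 'r"
      by (rule qeig_decomposition[OF idem])
  qed (simp_all add: qeig_0_inter_1 qeig_mprod_0_0[OF deriv] qeig_mprod_0_1[OF deriv]
      qeig_mprod_1_1[OF deriv char2])
qed

end
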